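(* For every positive integer $n$ and every $\epsilon\ge 0$ (with the case $\epsilon=4$ understood as the limit $\epsilon\to4$ of the right-hand side), $$\sum_{i=1}^n\left|\Phi^{-1}\left(\frac{i}{n+1}\right)\right|^{2\epsilon}\le 2^{\frac{11}{4}\epsilon+1}(n+1)^{\frac{\epsilon}{4}}\left(1+\frac{\left(\left\lceil\frac{n+1}{2}\right\rceil\right)^{1-\frac{\epsilon}{4}}-1}{1-\frac{\epsilon}{4}}\right).$$
   Context: $\Phi^{-1}$ is the quantile function (inverse CDF) of the standard normal distribution; $\lceil\cdot\rceil$ is the ceiling function. *)

theory Defs
  imports "HOL-Probability.Probability"
begin

definition std_normal_cdf :: "real \<Rightarrow> real" where
  "std_normal_cdf x = cdf (density lborel std_normal_density) x"

text \<open>Quantile function (inverse CDF) of the standard normal distribution,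
  meaningful for p in (0,1).\<close>
definition std_normal_quantile :: "real \<Rightarrow> real" where
  "std_normal_quantile p = (THE x. std_normal_cdf x = p)"

text \<open>Real power |x|^e with the usual convention 0^0 = 1 (Isabelle's powr has 0 powr 0 = 0).\<close>
definition abs_pow :: "real \<Rightarrow> real \<Rightarrow> real" where
  "abs_pow x e = (if x = 0 then (if e = 0 then 1 else 0) else \<bar>x\<bar> powr e)"

text \<open>(c^a - 1)/a, with its limit ln c at a = 0.\<close>
definition pow_ratio :: "real \<Rightarrow> real \<Rightarrow> real" where
  "pow_ratio c a = (if a = 0 then ln c else (c powr a - 1) / a)"

end

(* Let q = Phi^-1(p) with 0 < p < 1. Markov's inequality applied to X^8 for a standard normal X,
   whose mean 105 is below 2^11, gives min(p, 1 - p) * q^8 <= 105. At p = i/(n+1) this yields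
   |q|^(2 eps) = (q^8)^(eps/4) <= 2^(11 eps/4) (n+1)^(eps/4) m^(-eps/4) with m = min(i, n+1-i).
   Every value m <= ceil((n+1)/2) is taken by at most two indices i, and comparing the sum with
   an integral, sum_{j=1..c} j^(-a) <= 1 + int_1^c x^(-a) dx = 1 + (c^(1-a) - 1)/(1 - a). *)

theory Submission
  imports Defs
begin

abbreviation std_normal :: "real measure" where
  "std_normal \<equiv> density lborel (\<lambda>x. ennreal (std_normal_density x))"

lemma real_distribution_std_normal: "real_distribution std_normal"
proof -
  have "prob_space std_normal"
    by (rule prob_space_normal_density) simp
  then show ?thesis
    by (simp add: real_distribution_def real_distribution_axioms_def)
qed

lemma std_normal_cdf_eq_cdf: "std_normal_cdf = cdf std_normal"
  by (simp add: fun_eq_iff std_normal_cdf_def)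

lemma null_sets_std_normal: "null_sets std_normal = null_sets lborel"
proof -
  have "A \<in> null_sets std_normal \<longleftrightarrow> A \<in> sets lborel \<and> (AE x in lborel. x \<notin> A)" for A
  proof -
    have AE_eq: "(AE x\<in>A in lborel. std_normal_density x = 0)
          \<longleftrightarrow> (AE x in lborel. x \<notin> A)"
      by (intro AE_cong) (auto simp: std_normal_density_def)
    show ?thesis
      by (subst null_sets_density_iff) (simp_all add: AE_eq)
  qed
  moreover have "A \<in> null_sets lborel \<longleftrightarrow> A \<in> sets lborel \<and> (AE x in lborel. x \<notin> A)"
    for A :: "real set"
    using AE_iff_null_sets null_setsD2 by blast
  ultimately show ?thesis
    by blast
qed

lemma isCont_std_normal_cdf: "isCont std_normal_cdf x"
proof -
  interpret real_distribution std_normal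
    by (rule real_distribution_std_normal)
  have "{x} \<in> null_sets std_normal"
    by (simp add: null_sets_std_normal finite_imp_null_set_lborel)
  then show ?thesis
    by (simp add: std_normal_cdf_eq_cdf isCont_cdf measure_eq_0_null_sets)
qed

lemma strict_mono_std_normal_cdf: "strict_mono std_normal_cdf"
proof
  fix x y :: real
  assume "x < y"
  interpret real_distribution std_normal
    by (rule real_distribution_std_normal)
  have "{x<..y} \<notin> null_sets std_normal"
    using \<open>x < y\<close> unfolding null_sets_std_normal by (simp add: null_sets_def)
  then have "prob {x<..y} \<noteq> 0"
    by (auto simp: emeasure_eq_measure null_sets_def)
  then have "prob {x<..y} > 0"
    using measure_nonneg[of std_normal "{x<..y}"] by linarith
  then show "std_normal_cdf x < std_normal_cdf y"
    using cdf_diff_eq[OF \<open>x < y\<close>] by (simp add: std_normal_cdf_eq_cdf)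
qed

lemma std_normal_cdf_quantile:
  assumes "0 < p" "p < 1"
  shows "std_normal_cdf (std_normal_quantile p) = p"
proof -
  interpret real_distribution std_normal
    by (rule real_distribution_std_normal)
  obtain a where a: "std_normal_cdf a < p"
    using order_tendstoD(2)[OF cdf_lim_at_bot \<open>0 < p\<close>]
    by (auto simp: eventually_at_bot_linorder std_normal_cdf_eq_cdf)
  obtain b where b: "p < std_normal_cdf b"
    using order_tendstoD(1)[OF cdf_lim_at_top_prob \<open>p < 1\<close>]
    by (auto simp: eventually_at_top_linorder std_normal_cdf_eq_cdf)
  have "a \<le> b"
    using a b strict_mono_less_eq[OF strict_mono_std_normal_cdf, of b a] by linarith
  moreover have "continuous_on {a..b} std_normal_cdf"
    using isCont_std_normal_cdf by (simp add: continuous_at_imp_continuous_on)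
  ultimately obtain x where "std_normal_cdf x = p"
    using IVT'[of std_normal_cdf a p b] a b by force
  moreover have "inj std_normal_cdf"
    using strict_mono_std_normal_cdf by (rule strict_mono_imp_inj_on)
  ultimately have "\<exists>!x. std_normal_cdf x = p"
    by (blast dest: injD)
  then show ?thesis
    unfolding std_normal_quantile_def by (rule theI')
qed

lemma (in real_distribution) min_cdf_le_prob_abs_ge:
  "min (cdf M q) (1 - cdf M q) \<le> prob {x. \<bar>q\<bar> \<le> \<bar>x\<bar>}"
proof (cases "q < 0")
  case True
  have "cdf M q = prob {..q}"
    by (simp add: cdf_def)
  also have "\<dots> \<le> prob {x. \<bar>q\<bar> \<le> \<bar>x\<bar>}"
    using True by (intro finite_measure_mono) auto
  finally show ?thesis
    by linarith
next
  case False
  have "1 - cdf M q = prob (space M - {..q})"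
    using prob_compl[of "{..q}"] by (simp add: cdf_def)
  also have "\<dots> \<le> prob {x. \<bar>q\<bar> \<le> \<bar>x\<bar>}"
    using False by (intro finite_measure_mono) auto
  finally show ?thesis
    by linarith
qed

lemma (in real_distribution) min_cdf_mult_even_power_le_moment:
  assumes "integrable M (\<lambda>x. x ^ (2 * k))"
  shows "min (cdf M q) (1 - cdf M q) * q ^ (2 * k) \<le> expectation (\<lambda>x. x ^ (2 * k))"
proof (cases "q ^ (2 * k) = 0")
  case True
  have "0 \<le> expectation (\<lambda>x. x ^ (2 * k))"
    by (intro integral_nonneg_AE AE_I2) (simp add: power_mult)
  with True show ?thesis
    by (metis mult_zero_right)
next
  case False
  have "q ^ (2 * k) \<ge> 0"
    by (rule zero_le_even_power) simp
  with False have pos: "q ^ (2 * k) > 0"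
    by linarith
  have "min (cdf M q) (1 - cdf M q) \<le> prob {x. \<bar>q\<bar> \<le> \<bar>x\<bar>}"
    by (rule min_cdf_le_prob_abs_ge)
  also have "\<dots> \<le> prob {x \<in> space M. q ^ (2 * k) \<le> x ^ (2 * k)}"
    using power_mono_even[of "2 * k" q] by (intro finite_measure_mono) auto
  also have "\<dots> \<le> expectation (\<lambda>x. x ^ (2 * k)) / q ^ (2 * k)"
    using pos by (rule integral_Markov_inequality_measure[OF assms, of UNIV, rotated 2])
      (simp_all add: power_mult)
  finally show ?thesis
    using pos by (simp add: pos_le_divide_eq)
qed

lemma std_normal_min_cdf_mult_power8_le:
  "min (std_normal_cdf q) (1 - std_normal_cdf q) * q ^ 8 \<le> 105"
proof -
  interpret real_distribution std_normal
    by (rule real_distribution_std_normal)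
  have "integrable std_normal (\<lambda>x. x ^ (2 * 4))"
    by (subst integrable_density) (auto intro: integrable_std_normal_moment)
  moreover have "expectation (\<lambda>x. x ^ (2 * 4)) = 105"
    using integral_std_normal_moment_even[of 4]
    by (subst integral_density) (auto simp: fact_numeral)
  ultimately show ?thesis
    using min_cdf_mult_even_power_le_moment[of 4 q] by (simp add: std_normal_cdf_eq_cdf)
qed

lemma abs_pow_std_normal_quantile_le:
  assumes "0 < p" "p < 1" "\<epsilon> \<ge> 0"
  shows "abs_pow (std_normal_quantile p) (2 * \<epsilon>) \<le> (105 / min p (1 - p)) powr (\<epsilon> / 4)"
proof -
  define q where "q = std_normal_quantile p"
  have m: "min p (1 - p) > 0"
    using assms by simp
  have "min p (1 - p) * q ^ 8 \<le> 105"
    using std_normal_min_cdf_mult_power8_le[of q] std_normal_cdf_quantile[OF assms(1,2)]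
    by (simp add: q_def)
  then have q8: "q ^ 8 \<le> 105 / min p (1 - p)"
    using m by (simp add: pos_le_divide_eq mult.commute)
  show ?thesis
  proof (cases "q = 0")
    case True
    moreover have "min p (1 - p) \<noteq> 0"
      using m by linarith
    ultimately show ?thesis
      by (simp add: abs_pow_def q_def)
  next
    case False
    have "abs_pow q (2 * \<epsilon>) = \<bar>q\<bar> powr (8 * (\<epsilon> / 4))"
      using False by (simp add: abs_pow_def)
    also have "\<dots> = (\<bar>q\<bar> powr 8) powr (\<epsilon> / 4)"
      by (rule powr_powr[symmetric])
    also have "\<bar>q\<bar> powr 8 = q ^ 8"
      using False by simp
    also have "(q ^ 8) powr (\<epsilon> / 4) \<le> (105 / min p (1 - p)) powr (\<epsilon> / 4)"
      using q8 assms(3) by (intro powr_mono2) auto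
    finally show ?thesis
      by (simp add: q_def)
  qed
qed

lemma abs_pow_std_normal_quantile_grid_le:
  assumes "i \<in> {1..n}" "\<epsilon> \<ge> 0"
  shows "abs_pow (std_normal_quantile (real i / real (n + 1))) (2 * \<epsilon>)
    \<le> 2 powr (11 / 4 * \<epsilon>) * real (n + 1) powr (\<epsilon> / 4)
       * real (min i (n + 1 - i)) powr - (\<epsilon> / 4)"
proof -
  define p where "p = real i / real (n + 1)"
  define m where "m = min i (n + 1 - i)"
  have p: "0 < p" "p < 1"
    using assms(1) by (auto simp: p_def field_simps)
  have "min p (1 - p) = min (real i) (real (n + 1 - i)) / real (n + 1)"
    using assms(1) by (simp add: p_def min_divide_distrib_right field_simps of_nat_diff)
  then have min_p: "min p (1 - p) = real m / real (n + 1)"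
    by (simp add: m_def)
  have "(105::real) powr (\<epsilon> / 4) \<le> (2 powr 11) powr (\<epsilon> / 4)"
    using assms(2) by (intro powr_mono2) auto
  also have "\<dots> = 2 powr (11 / 4 * \<epsilon>)"
    by (simp only: powr_powr) (simp add: field_simps)
  finally have const: "(105::real) powr (\<epsilon> / 4) \<le> 2 powr (11 / 4 * \<epsilon>)" .
  have "abs_pow (std_normal_quantile p) (2 * \<epsilon>) \<le> (105 / min p (1 - p)) powr (\<epsilon> / 4)"
    using abs_pow_std_normal_quantile_le[OF p assms(2)] .
  also have "\<dots> = 105 powr (\<epsilon> / 4) * (real (n + 1) powr (\<epsilon> / 4) * real m powr - (\<epsilon> / 4))"
    unfolding min_p by (simp only: divide_divide_eq_right powr_divide powr_mult powr_minus_divide) simp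
  also have "\<dots> \<le> 2 powr (11 / 4 * \<epsilon>) * (real (n + 1) powr (\<epsilon> / 4) * real m powr - (\<epsilon> / 4))"
    using const by (rule mult_right_mono) simp
  finally show ?thesis
    by (simp add: p_def m_def mult.assoc)
qed

lemma has_real_derivative_pow_ratio:
  assumes "x > 0"
  shows "((\<lambda>x. pow_ratio x b) has_real_derivative x powr (b - 1)) (at x)"
proof (cases "b = 0")
  case True
  have "(ln has_real_derivative 1 / x) (at x)"
    using assms by (auto intro!: derivative_eq_intros)
  then show ?thesis
    using True assms by (simp add: pow_ratio_def powr_minus_divide)
next
  case False
  have "((\<lambda>x. (x powr b - 1) / b) has_real_derivative b * x powr (b - 1) / b) (at x)"
    using assms by (auto intro!: derivative_eq_intros)
  then show ?thesis
    using False by (simp add: pow_ratio_def)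
qed

lemma powr_le_pow_ratio_diff:
  assumes "a \<ge> 0" "x > 0"
  shows "(x + 1) powr - a \<le> pow_ratio (x + 1) (1 - a) - pow_ratio x (1 - a)"
proof -
  have "((\<lambda>t. pow_ratio t (1 - a)) has_real_derivative t powr - a) (at t)"
    if "x \<le> t" for t
    using has_real_derivative_pow_ratio[of t "1 - a"] that assms(2) by simp
  then obtain z where z: "x < z" "z < x + 1"
    "pow_ratio (x + 1) (1 - a) - pow_ratio x (1 - a) = z powr - a"
    using MVT2[of x "x + 1" "\<lambda>t. pow_ratio t (1 - a)" "\<lambda>t. t powr - a"] by auto
  have "(x + 1) powr - a \<le> z powr - a"
    using z assms by (intro powr_mono2') auto
  with z(3) show ?thesis
    by simp
qed

lemma sum_powr_le_pow_ratio:
  assumes "a \<ge> 0" "c \<ge> 1"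
  shows "(\<Sum>j=1..c. real j powr - a) \<le> 1 + pow_ratio (real c) (1 - a)"
  using assms(2)
proof (induction c rule: dec_induct)
  case base
  then show ?case
    by (simp add: pow_ratio_def)
next
  case (step k)
  have "real (Suc k) powr - a \<le> pow_ratio (real (Suc k)) (1 - a) - pow_ratio (real k) (1 - a)"
    using powr_le_pow_ratio_diff[OF assms(1), of "real k"] step.hyps by (simp add: add.commute)
  with step.IH show ?case
    by simp
qed

lemma sum_min_reflect_le:
  fixes f :: "nat \<Rightarrow> real"
  assumes "\<And>j. f j \<ge> 0" "n + 1 \<le> 2 * c"
  shows "(\<Sum>i=1..n. f (min i (n + 1 - i))) \<le> 2 * (\<Sum>j=1..c. f j)"
proof -
  define A where "A = {i \<in> {1..n}. 2 * i \<le> n + 1}"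
  define B where "B = {i \<in> {1..n}. \<not> 2 * i \<le> n + 1}"
  have AB: "{1..n} = A \<union> B" "A \<inter> B = {}"
    by (auto simp: A_def B_def)
  have "(\<Sum>i=1..n. f (min i (n + 1 - i)))
      = (\<Sum>i\<in>A. f (min i (n + 1 - i))) + (\<Sum>i\<in>B. f (min i (n + 1 - i)))"
    unfolding AB(1) by (rule sum.union_disjoint) (auto simp: AB(2) A_def B_def)
  also have "(\<Sum>i\<in>A. f (min i (n + 1 - i))) = (\<Sum>i\<in>A. f i)"
    by (rule sum.cong) (auto simp: A_def min_def)
  also have "(\<Sum>i\<in>B. f (min i (n + 1 - i))) = (\<Sum>j\<in>(\<lambda>i. n + 1 - i) ` B. f j)"
    by (subst sum.reindex) (auto intro!: inj_onI sum.cong simp: B_def min_def)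
  also have "(\<Sum>i\<in>A. f i) \<le> (\<Sum>j=1..c. f j)"
    using assms by (intro sum_mono2) (auto simp: A_def)
  also have "(\<Sum>j\<in>(\<lambda>i. n + 1 - i) ` B. f j) \<le> (\<Sum>j=1..c. f j)"
    using assms by (intro sum_mono2) (auto simp: B_def)
  finally show ?thesis
    by simp
qed

theorem lemma7:
  fixes n :: nat and \<epsilon> :: real
  assumes "n \<ge> 1" and "\<epsilon> \<ge> 0"
  shows "(\<Sum>i=1..n. abs_pow (std_normal_quantile (real i / real (n + 1))) (2 * \<epsilon>))
    \<le> 2 powr (11 / 4 * \<epsilon> + 1) * real (n + 1) powr (\<epsilon> / 4)
       * (1 + pow_ratio (real_of_int \<lceil>real (n + 1) / 2\<rceil>) (1 - \<epsilon> / 4))"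
proof -
  define a where "a = \<epsilon> / 4"
  define c where "c = nat \<lceil>real (n + 1) / 2\<rceil>"
  define K where "K = 2 powr (11 / 4 * \<epsilon>) * real (n + 1) powr a"
  have c_eq: "real_of_int \<lceil>real (n + 1) / 2\<rceil> = real c"
    by (simp add: c_def)
  then have "real (n + 1) \<le> real (2 * c)"
    using le_of_int_ceiling[of "real (n + 1) / 2"] by simp
  then have c2: "n + 1 \<le> 2 * c"
    by (simp only: of_nat_le_iff)
  have "(\<Sum>i=1..n. abs_pow (std_normal_quantile (real i / real (n + 1))) (2 * \<epsilon>))
      \<le> (\<Sum>i=1..n. K * real (min i (n + 1 - i)) powr - a)"
    using abs_pow_std_normal_quantile_grid_le assms(2) by (intro sum_mono) (simp add: K_def a_def)
  also have "\<dots> = K * (\<Sum>i=1..n. real (min i (n + 1 - i)) powr - a)"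
    by (simp add: sum_distrib_left)
  also have "\<dots> \<le> K * (2 * (\<Sum>j=1..c. real j powr - a))"
    using sum_min_reflect_le[of "\<lambda>j. real j powr - a", OF _ c2] by (simp add: K_def)
  also have "\<dots> \<le> K * (2 * (1 + pow_ratio (real c) (1 - a)))"
    using sum_powr_le_pow_ratio[of a c] assms c2 by (simp add: K_def a_def)
  also have "\<dots> = 2 powr (11 / 4 * \<epsilon> + 1) * real (n + 1) powr (\<epsilon> / 4)
       * (1 + pow_ratio (real_of_int \<lceil>real (n + 1) / 2\<rceil>) (1 - \<epsilon> / 4))"
    unfolding c_eq by (simp add: K_def a_def powr_add)
  finally show ?thesis .
qed

end
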